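(* Let $\mathcal{U}\subseteq\mathbb{R}^n$ be a domain and $F=u\,\phi(r,s)$ a spherically symmetric Finsler metric on $\mathcal{U}$, where $u=|y|$, $r=|x|$, $s=\langle x,y\rangle/|y|$ and $\phi$ is smooth. Put $\sigma_1=\phi-s\phi_s$ and $\rho=\phi\,[\sigma_1+(r^2-s^2)\phi_{ss}]$. Then the norm of the mean Cartan torsion of $F$ is $$\|\mathbf{I}\|=\left|\frac{(n+1)(\sigma_1\phi_s-s\phi\phi_{ss})(\sigma_1+(r^2-s^2)\phi_{ss})+(r^2-s^2)(\sigma_1\phi_{sss}+3s\phi_{ss}^2)\phi}{2u\,\sigma_1\,\rho}\right|\sqrt{\frac{r^2-s^2}{\rho}}.$$
   Context: Here $|\cdot|$, $\langle\cdot,\cdot\rangle$ are the Euclidean norm and inner product on $\mathbb{R}^n$; subscripts $s$ denote partial derivatives in $s$. For a Finsler metric $F$: $g_{ij}=\tfrac12(F^2)_{y^iy^j}$, $(g^{ij})$ its inverse, $C_{ijk}=\tfrac12\partial g_{ij}/\partial y^k$, mean Cartan torsion $I_i=g^{jk}C_{ijk}$, and $\|\mathbf{I}\|^2=g^{ij}I_iI_j$. *)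

theory Defs
  imports "HOL-Analysis.Analysis"
begin

definition dirderiv :: "('a::real_normed_vector \<Rightarrow> real) \<Rightarrow> 'a \<Rightarrow> 'a \<Rightarrow> real" where
  "dirderiv f x v = deriv (\<lambda>t. f (x + t *\<^sub>R v)) 0"

fun iter_dir :: "'a::real_normed_vector list \<Rightarrow> ('a \<Rightarrow> real) \<Rightarrow> 'a \<Rightarrow> real" where
  "iter_dir [] f = f"
| "iter_dir (v # vs) f = (\<lambda>x. dirderiv (iter_dir vs f) x v)"

definition smooth_on :: "'a::euclidean_space set \<Rightarrow> ('a \<Rightarrow> real) \<Rightarrow> bool" where
  "smooth_on S f \<longleftrightarrow> open S \<and>
     (\<forall>vs. set vs \<subseteq> Basis \<longrightarrow>
        continuous_on S (iter_dir vs f) \<and>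
        (\<forall>v\<in>Basis. \<forall>x\<in>S.
           ((\<lambda>t. iter_dir vs f (x + t *\<^sub>R v)) has_real_derivative iter_dir (v # vs) f x) (at 0)))"

definition ypd :: "'n::finite \<Rightarrow> (real^'n \<Rightarrow> real) \<Rightarrow> real^'n \<Rightarrow> real" where
  "ypd i f y = dirderiv f y (axis i 1)"

definition fund_tensor :: "(real^'n \<Rightarrow> real^'n \<Rightarrow> real) \<Rightarrow> real^'n \<Rightarrow> real^'n \<Rightarrow> 'n::finite \<Rightarrow> 'n \<Rightarrow> real" where
  "fund_tensor F x y i j = (1/2) * ypd i (\<lambda>y'. ypd j (\<lambda>y''. (F x y'')\<^sup>2) y') y"

definition fund_matrix :: "(real^'n \<Rightarrow> real^'n \<Rightarrow> real) \<Rightarrow> real^'n \<Rightarrow> real^'n \<Rightarrow> real^'n^'n::finite" where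
  "fund_matrix F x y = (\<chi> i j. fund_tensor F x y i j)"

definition cartan :: "(real^'n \<Rightarrow> real^'n \<Rightarrow> real) \<Rightarrow> real^'n \<Rightarrow> real^'n \<Rightarrow> 'n::finite \<Rightarrow> 'n \<Rightarrow> 'n \<Rightarrow> real" where
  "cartan F x y i j k = (1/2) * ypd k (\<lambda>y'. fund_tensor F x y' i j) y"

definition mean_cartan :: "(real^'n \<Rightarrow> real^'n \<Rightarrow> real) \<Rightarrow> real^'n \<Rightarrow> real^'n \<Rightarrow> 'n::finite \<Rightarrow> real" where
  "mean_cartan F x y i =
     (\<Sum>j\<in>UNIV. \<Sum>k\<in>UNIV. matrix_inv (fund_matrix F x y) $ j $ k * cartan F x y i j k)"

definition mean_cartan_norm :: "(real^'n \<Rightarrow> real^'n \<Rightarrow> real) \<Rightarrow> real^'n \<Rightarrow> real^'n::finite \<Rightarrow> real" where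
  "mean_cartan_norm F x y =
     sqrt (\<Sum>i\<in>UNIV. \<Sum>j\<in>UNIV. matrix_inv (fund_matrix F x y) $ i $ j
                                   * mean_cartan F x y i * mean_cartan F x y j)"

definition finsler_metric :: "(real^'n::finite) set \<Rightarrow> (real^'n \<Rightarrow> real^'n \<Rightarrow> real) \<Rightarrow> bool" where
  "finsler_metric U F \<longleftrightarrow>
     open U \<and>
     smooth_on (U \<times> (UNIV - {0})) (\<lambda>p. F (fst p) (snd p)) \<and>
     (\<forall>x\<in>U. \<forall>y. F x y \<ge> 0) \<and>
     (\<forall>x\<in>U. \<forall>y. \<forall>l>0. F x (l *\<^sub>R y) = l * F x y) \<and>
     (\<forall>x\<in>U. \<forall>y. y \<noteq> 0 \<longrightarrow>
        (\<forall>\<xi>::real^'n. \<xi> \<noteq> 0 \<longrightarrow>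
           (\<Sum>i\<in>UNIV. \<Sum>j\<in>UNIV. fund_tensor F x y i j * \<xi> $ i * \<xi> $ j) > 0))"

definition ds :: "(real \<Rightarrow> real \<Rightarrow> real) \<Rightarrow> real \<Rightarrow> real \<Rightarrow> real" where
  "ds \<phi> r s = deriv (\<lambda>t. \<phi> r t) s"

end

theory Submission
  imports Defs
begin

(*
  Write l = y/|y| and z = x - s l, so that l is a unit vector orthogonal to z and
  |z|^2 = r^2 - s^2.  Differentiating F^2 = |y|^2 phi^2 along lines shows that g_ij is a
  combination of delta_ij, l_i l_j, l_i z_j + z_i l_j and z_i z_j, and that C_ijk is a
  combination of the corresponding symmetric cubic tensors, with coefficients built from phi
  and its s-derivatives.  Matrices of this shape are closed under inversion, so g^ij is again
  of this shape with explicit coefficients; contracting gives I_i = alpha z_i, hence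
  ||I||^2 = alpha^2 g^ij z_i z_j = alpha^2 (r^2 - s^2) / rho.  Positive definiteness of g_ij,
  tested on l and on a suitable vector in the span of l and z, gives phi <> 0 and rho <> 0,
  which is what the inversion needs.
*)

section \<open>Derivatives in s and directional derivatives\<close>

lemma iter_dir_snd_axis:
  "iter_dir (replicate k (0, 1)) (\<lambda>p. \<phi> (fst p) (snd p)) (a, b) = (ds ^^ k) \<phi> a b"
proof (induction k arbitrary: b)
  case (Suc k)
  then show ?case
    by (simp add: dirderiv_def ds_def deriv_shift_0[of _ b] comp_def)
qed simp

lemma has_real_derivative_ds_iterate:
  assumes "smooth_on \<Omega> (\<lambda>p. \<phi> (fst p) (snd p))" and "(a, b) \<in> \<Omega>"
  shows "((ds ^^ k) \<phi> a has_real_derivative (ds ^^ Suc k) \<phi> a b) (at b)"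
proof -
  have snd_basis: "(0, 1) \<in> (Basis :: (real \<times> real) set)"
    by (simp add: Basis_prod_def)
  then have "set (replicate k (0, 1)) \<subseteq> (Basis :: (real \<times> real) set)"
    by auto
  with assms snd_basis
  have "((\<lambda>t. iter_dir (replicate k (0, 1)) (\<lambda>p. \<phi> (fst p) (snd p)) ((a, b) + t *\<^sub>R (0, 1)))
      has_real_derivative iter_dir ((0, 1) # replicate k (0, 1)) (\<lambda>p. \<phi> (fst p) (snd p)) (a, b)) (at 0)"
    unfolding smooth_on_def by blast
  then have "((\<lambda>t. (ds ^^ k) \<phi> a (b + t)) has_real_derivative (ds ^^ Suc k) \<phi> a b) (at 0)"
    using iter_dir_snd_axis[of "Suc k" \<phi> a b] by (simp add: iter_dir_snd_axis)
  then show ?thesis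
    using DERIV_shift[of "(ds ^^ k) \<phi> a" _ 0 b] by (simp add: add.commute)
qed

lemma dirderiv_eqI:
  "((\<lambda>t. f (y + t *\<^sub>R q)) has_real_derivative D) (at 0) \<Longrightarrow> dirderiv f y q = D"
  unfolding dirderiv_def by (rule DERIV_imp_deriv)

lemma dirderiv_cong_nonzero:
  fixes y q :: "'a::real_normed_vector"
  assumes "y \<noteq> 0" and "\<And>y'. y' \<noteq> 0 \<Longrightarrow> f y' = g y'"
  shows "dirderiv f y q = dirderiv g y q"
proof -
  have "continuous (at 0) (\<lambda>t::real. y + t *\<^sub>R q)"
    by (intro continuous_intros)
  then have "((\<lambda>t. y + t *\<^sub>R q) \<longlongrightarrow> y) (nhds 0)"
    by (simp add: continuous_at tendsto_nhds_iff)
  then have "\<forall>\<^sub>F t in nhds 0. y + t *\<^sub>R q \<noteq> 0"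
    using assms(1) by (rule tendsto_imp_eventually_ne)
  then have "\<forall>\<^sub>F t in nhds 0. f (y + t *\<^sub>R q) = g (y + t *\<^sub>R q)"
    by eventually_elim (use assms(2) in blast)
  then show ?thesis
    unfolding dirderiv_def by (rule deriv_cong_ev) simp
qed

section \<open>The orthogonal frame of x relative to y\<close>

definition s_coord :: "'a::real_inner \<Rightarrow> 'a \<Rightarrow> real" where
  "s_coord x y = inner x y / norm y"

definition orth_part :: "'a::real_inner \<Rightarrow> 'a \<Rightarrow> 'a" where
  "orth_part x y = x - s_coord x y *\<^sub>R sgn y"

lemma inner_sgn_self: "y \<noteq> 0 \<Longrightarrow> sgn y \<bullet> sgn y = 1"
  for y :: "'a::real_inner"
  by (simp add: dot_square_norm norm_sgn)

lemma inner_sgn_s_coord: "sgn y \<bullet> x = s_coord x y"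
  for x y :: "'a::real_inner"
  by (simp add: sgn_div_norm s_coord_def inner_commute divide_inverse mult.commute)

lemma inner_sgn_orth_part: "y \<noteq> 0 \<Longrightarrow> sgn y \<bullet> orth_part x y = 0"
  for x y :: "'a::real_inner"
  using inner_sgn_s_coord[of y x]
  by (simp add: orth_part_def inner_diff_right inner_sgn_self)

lemma inner_orth_part_self: "y \<noteq> 0 \<Longrightarrow> orth_part x y \<bullet> orth_part x y = (norm x)\<^sup>2 - (s_coord x y)\<^sup>2"
  for x y :: "'a::real_inner"
  using inner_sgn_s_coord[of y x] inner_commute[of x "sgn y"]
  by (simp add: orth_part_def inner_diff_left inner_diff_right inner_sgn_self power2_eq_square)
    (simp add: dot_square_norm power2_eq_square)

context
  fixes x y q :: "'a::real_inner"
  assumes y_nonzero: "y \<noteq> 0"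
begin

lemma has_real_derivative_norm_line:
  "((\<lambda>t. norm (y + t *\<^sub>R q)) has_real_derivative sgn y \<bullet> q) (at 0)"
proof -
  have "(norm has_derivative (\<lambda>h. h \<bullet> sgn y)) (at (y + 0 *\<^sub>R q))"
    using has_derivative_norm[OF y_nonzero] by simp
  moreover have "((\<lambda>t. y + t *\<^sub>R q) has_derivative (\<lambda>t. t *\<^sub>R q)) (at 0)"
    by (auto intro!: derivative_eq_intros)
  ultimately have "((\<lambda>t. norm (y + t *\<^sub>R q)) has_derivative (\<lambda>t. (t *\<^sub>R q) \<bullet> sgn y)) (at 0)"
    using has_derivative_compose by blast
  moreover have "(\<lambda>t. (t *\<^sub>R q) \<bullet> sgn y) = (*) (sgn y \<bullet> q)"
    by (auto simp: inner_commute)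
  ultimately show ?thesis
    by (simp add: has_field_derivative_def)
qed

lemma has_real_derivative_s_coord_line:
  "((\<lambda>t. s_coord x (y + t *\<^sub>R q)) has_real_derivative orth_part x y \<bullet> q / norm y) (at 0)"
proof -
  have "((\<lambda>t. x \<bullet> (y + t *\<^sub>R q)) has_real_derivative x \<bullet> q) (at 0)"
    by (auto simp: inner_add_right intro!: derivative_eq_intros)
  from DERIV_divide[OF this has_real_derivative_norm_line] y_nonzero
  have "((\<lambda>t. x \<bullet> (y + t *\<^sub>R q) / norm (y + t *\<^sub>R q)) has_real_derivative
      ((x \<bullet> q) * norm y - (x \<bullet> y) * (sgn y \<bullet> q)) / (norm y * norm y)) (at 0)"
    by simp
  then show ?thesis
    using y_nonzero
    by (simp add: s_coord_def orth_part_def sgn_div_norm inner_diff_left field_simps)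
qed

lemma has_real_derivative_sgn_line:
  "((\<lambda>t. sgn (y + t *\<^sub>R q) \<bullet> v) has_real_derivative
     (v \<bullet> q - (sgn y \<bullet> v) * (sgn y \<bullet> q)) / norm y) (at 0)"
proof -
  have "((\<lambda>t. (y + t *\<^sub>R q) \<bullet> v) has_real_derivative q \<bullet> v) (at 0)"
    by (auto simp: inner_add_left intro!: derivative_eq_intros)
  from DERIV_divide[OF this has_real_derivative_norm_line] y_nonzero
  have "((\<lambda>t. (y + t *\<^sub>R q) \<bullet> v / norm (y + t *\<^sub>R q)) has_real_derivative
      ((q \<bullet> v) * norm y - (y \<bullet> v) * (sgn y \<bullet> q)) / (norm y * norm y)) (at 0)"
    by simp
  moreover have "((q \<bullet> v) * norm y - (y \<bullet> v) * (sgn y \<bullet> q)) / (norm y * norm y)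
      = (v \<bullet> q - (sgn y \<bullet> v) * (sgn y \<bullet> q)) / norm y"
    using y_nonzero by (simp add: sgn_div_norm inner_commute field_simps)
  moreover have "(\<lambda>t. sgn (y + t *\<^sub>R q) \<bullet> v) = (\<lambda>t. (y + t *\<^sub>R q) \<bullet> v / norm (y + t *\<^sub>R q))"
    by (simp add: sgn_div_norm divide_inverse mult.commute)
  ultimately show ?thesis
    by (simp only:)
qed

lemma has_real_derivative_orth_part_line:
  "((\<lambda>t. orth_part x (y + t *\<^sub>R q) \<bullet> v) has_real_derivative
     - ((orth_part x y \<bullet> q) * (sgn y \<bullet> v) + s_coord x y * (v \<bullet> q - (sgn y \<bullet> v) * (sgn y \<bullet> q)))
       / norm y) (at 0)"
proof -
  have "(\<lambda>t. orth_part x (y + t *\<^sub>R q) \<bullet> v) = (\<lambda>t. x \<bullet> v - s_coord x (y + t *\<^sub>R q) * (sgn (y + t *\<^sub>R q) \<bullet> v))"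
    by (simp add: orth_part_def inner_diff_left)
  moreover have "((\<lambda>t. x \<bullet> v - s_coord x (y + t *\<^sub>R q) * (sgn (y + t *\<^sub>R q) \<bullet> v)) has_real_derivative
     - ((orth_part x y \<bullet> q) * (sgn y \<bullet> v) + s_coord x y * (v \<bullet> q - (sgn y \<bullet> v) * (sgn y \<bullet> q)))
       / norm y) (at 0)"
    by (rule derivative_eq_intros has_real_derivative_s_coord_line
        has_real_derivative_sgn_line refl)+
      (use y_nonzero in \<open>simp add: field_simps\<close>)
  ultimately show ?thesis by simp
qed

end

section \<open>Forms built from the frame\<close>

definition frame_form :: "real \<Rightarrow> real \<Rightarrow> real \<Rightarrow> real \<Rightarrow> 'a::real_inner \<Rightarrow> 'a \<Rightarrow> 'a \<Rightarrow> 'a \<Rightarrow> real" where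
  "frame_form m a b c l z v w =
     m * (v \<bullet> w) + a * (l \<bullet> v) * (l \<bullet> w) + b * ((l \<bullet> v) * (z \<bullet> w) + (z \<bullet> v) * (l \<bullet> w))
     + c * (z \<bullet> v) * (z \<bullet> w)"

definition frame_cubic :: "real \<Rightarrow> real \<Rightarrow> 'a::real_inner \<Rightarrow> 'a \<Rightarrow> 'a \<Rightarrow> 'a \<Rightarrow> 'a \<Rightarrow> real" where
  "frame_cubic k1 k2 l z v w q =
     k1 * ((v \<bullet> w) * (z \<bullet> q) + (v \<bullet> q) * (z \<bullet> w) + (w \<bullet> q) * (z \<bullet> v)
           - ((l \<bullet> v) * (l \<bullet> w) * (z \<bullet> q) + (l \<bullet> v) * (z \<bullet> w) * (l \<bullet> q) + (z \<bullet> v) * (l \<bullet> w) * (l \<bullet> q)))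
     + k2 * (z \<bullet> v) * (z \<bullet> w) * (z \<bullet> q)"

lemma frame_form_pos_def_imp:
  fixes l z :: "'a::real_inner"
  assumes "l \<bullet> l = 1" and "l \<bullet> z = 0"
    and pos: "\<And>\<xi>. \<xi> \<noteq> 0 \<Longrightarrow> 0 < frame_form m a b c l z \<xi> \<xi>"
  shows "0 < m + a"
    and "z \<noteq> 0 \<Longrightarrow> b\<^sup>2 * (z \<bullet> z) < (m + a) * (m + c * (z \<bullet> z))"
proof -
  have zl: "z \<bullet> l = 0"
    using assms(2) by (simp add: inner_commute)
  have "l \<noteq> 0"
    using assms(1) by auto
  from pos[OF this] show "0 < m + a"
    using assms(1) zl by (simp add: frame_form_def)
  assume "z \<noteq> 0"
  define w where "w = z \<bullet> z"
  have "0 < w"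
    using \<open>z \<noteq> 0\<close> by (simp add: w_def)
  \<comment> \<open>On the span of \<open>l, z\<close> the Gram matrix of the form is \<open>[[m + a, b w], [b w, w (m + c w)]]\<close>;
    evaluating at this \<open>\<xi>\<close> exposes its determinant.\<close>
  define \<xi> where "\<xi> = (m + a) *\<^sub>R z - (b * w) *\<^sub>R l"
  have l\<xi>: "l \<bullet> \<xi> = - (b * w)" and z\<xi>: "z \<bullet> \<xi> = (m + a) * w"
    and \<xi>\<xi>: "\<xi> \<bullet> \<xi> = (m + a)\<^sup>2 * w + (b * w)\<^sup>2"
    using assms(1,2) zl
    by (simp_all add: \<xi>_def w_def inner_diff_left inner_diff_right power2_eq_square algebra_simps)
  have "\<xi> \<noteq> 0"
    using z\<xi> \<open>0 < m + a\<close> \<open>0 < w\<close> by auto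
  from pos[OF this]
  have "0 < (m + a) * w * ((m + a) * (m + c * w) - b\<^sup>2 * w)"
    unfolding frame_form_def l\<xi> z\<xi> \<xi>\<xi> by (simp add: power2_eq_square algebra_simps)
  moreover have "0 < (m + a) * w"
    using \<open>0 < m + a\<close> \<open>0 < w\<close> by simp
  ultimately have "0 < (m + a) * (m + c * w) - b\<^sup>2 * w"
    by (rule zero_less_mult_pos)
  then show "b\<^sup>2 * (z \<bullet> z) < (m + a) * (m + c * (z \<bullet> z))"
    by (simp add: w_def)
qed

definition frame_matrix :: "real \<Rightarrow> real \<Rightarrow> real \<Rightarrow> real \<Rightarrow> real^'n \<Rightarrow> real^'n \<Rightarrow> real^'n^'n::finite" where
  "frame_matrix m a b c l z = (\<chi> i j. frame_form m a b c l z (axis i 1) (axis j 1))"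

lemma frame_matrix_nth:
  "frame_matrix m a b c l z $ i $ j
     = (if i = j then m else 0) + a * l $ i * l $ j + b * (l $ i * z $ j + z $ i * l $ j) + c * z $ i * z $ j"
  by (simp only: frame_matrix_def frame_form_def inner_axis_axis vec_lambda_beta)
    (simp add: inner_axis inner_axis')

lemma frame_matrix_mult_vec:
  "frame_matrix m a b c l z *v v
     = m *\<^sub>R v + (a * (l \<bullet> v) + b * (z \<bullet> v)) *\<^sub>R l + (b * (l \<bullet> v) + c * (z \<bullet> v)) *\<^sub>R z"
proof -
  have "(frame_matrix m a b c l z *v v) $ i
      = m * v $ i + (a * l $ i + b * z $ i) * (l \<bullet> v) + (b * l $ i + c * z $ i) * (z \<bullet> v)" for i
  proof -
    have "(frame_matrix m a b c l z *v v) $ i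
        = (\<Sum>j\<in>UNIV. (if i = j then m * v $ j else 0)
            + (a * l $ i + b * z $ i) * (l $ j * v $ j) + (b * l $ i + c * z $ i) * (z $ j * v $ j))"
      unfolding matrix_vector_mult_def vec_lambda_beta
      by (rule sum.cong) (auto simp: frame_matrix_nth algebra_simps)
    also have "\<dots> = m * v $ i + (a * l $ i + b * z $ i) * (l \<bullet> v) + (b * l $ i + c * z $ i) * (z \<bullet> v)"
      by (simp add: sum.distrib sum_distrib_left[symmetric] inner_vec_def inner_real_def)
    finally show ?thesis .
  qed
  then show ?thesis
    by (simp add: vec_eq_iff algebra_simps)
qed

lemma inner_frame_matrix_mult_vec:
  "u \<bullet> (frame_matrix m a b c l z *v v) = frame_form m a b c l z u v"
  by (simp add: frame_matrix_mult_vec frame_form_def inner_add_right inner_commute algebra_simps)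

lemma sum_frame_matrix_bilinear:
  "(\<Sum>i\<in>UNIV. \<Sum>j\<in>UNIV. frame_matrix m a b c l z $ i $ j * (u $ i * v $ j)) = frame_form m a b c l z u v"
  by (simp add: inner_frame_matrix_mult_vec[symmetric] inner_vec_def matrix_vector_mult_def
      sum_distrib_left mult_ac)

lemma trace_frame_matrix:
  "(\<Sum>i\<in>UNIV. frame_matrix m a b c l z $ i $ i)
     = real CARD('n) * m + a * (l \<bullet> l) + 2 * b * (l \<bullet> z) + c * (z \<bullet> z)"
  for l z :: "real^'n::finite"
proof -
  have "frame_matrix m a b c l z $ i $ i = m + a * (l $ i * l $ i) + 2 * b * (l $ i * z $ i) + c * (z $ i * z $ i)"
    for i
    by (simp add: frame_matrix_nth algebra_simps)
  then show ?thesis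
    by (simp add: sum.distrib sum_distrib_left[symmetric] inner_vec_def)
qed

lemma sum_sum_delta_mult:
  "(\<Sum>j\<in>UNIV. \<Sum>k\<in>UNIV. A $ j $ k * (if j = k then c else 0)) = c * (\<Sum>j\<in>UNIV. A $ j $ j)"
  for A :: "real^'n::finite^'n"
proof -
  have "(\<Sum>k\<in>UNIV. A $ j $ k * (if j = k then c else 0)) = (\<Sum>k\<in>UNIV. if j = k then A $ j $ k * c else 0)" for j
    by (rule sum.cong) auto
  then show ?thesis
    by (simp add: sum_distrib_left mult.commute)
qed

lemma frame_cubic_axis:
  "frame_cubic k1 k2 l z v (axis j 1) (axis k 1)
     = k1 * (v $ j * z $ k + v $ k * z $ j + (if j = k then z \<bullet> v else 0)
             - ((l \<bullet> v) * (l $ j * z $ k) + (l \<bullet> v) * (z $ j * l $ k) + (z \<bullet> v) * (l $ j * l $ k)))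
       + k2 * (z \<bullet> v) * (z $ j * z $ k)"
  by (simp only: frame_cubic_def inner_axis_axis)
    (simp add: inner_axis inner_axis' inner_commute[of _ v] algebra_simps)

lemma matrix_inv_eqI:
  fixes A B :: "real^'n::finite^'n"
  assumes "A ** B = mat 1"
  shows "matrix_inv A = B"
proof -
  have BA: "B ** A = mat 1"
    using assms matrix_left_right_inverse by blast
  define A' where "A' = matrix_inv A"
  have "A ** A' = mat 1 \<and> A' ** A = mat 1"
    unfolding A'_def matrix_inv_def by (rule someI[of _ B]) (use assms BA in blast)
  then have "A' = (A' ** A) ** B"
    using assms by (metis matrix_mul_assoc matrix_mul_rid)
  also have "\<dots> = B"
    using \<open>A ** A' = mat 1 \<and> A' ** A = mat 1\<close> by (simp add: matrix_mul_lid)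
  finally show ?thesis
    by (simp add: A'_def)
qed

lemma matrix_inv_frame_matrix:
  fixes l z :: "real^'n::finite"
  assumes "l \<bullet> l = 1" and "l \<bullet> z = 0" and "z \<bullet> z = w"
    and "m1 * m2 = 1"
    and "m2 * a1 + a2 * (m1 + a1) + b2 * b1 * w = 0"
    and "m2 * b1 + b2 * (m1 + a1) + c2 * b1 * w = 0"
    and "m2 * b1 + a2 * b1 + b2 * (m1 + c1 * w) = 0"
    and "m2 * c1 + b2 * b1 + c2 * (m1 + c1 * w) = 0"
  shows "matrix_inv (frame_matrix m1 a1 b1 c1 l z) = frame_matrix m2 a2 b2 c2 l z"
proof (rule matrix_inv_eqI, unfold matrix_eq, intro allI)
  fix v :: "real^'n"
  let ?A = "frame_matrix m1 a1 b1 c1 l z" and ?B = "frame_matrix m2 a2 b2 c2 l z"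
  have "?A ** ?B *v v = m1 *\<^sub>R (?B *v v)
      + (a1 * frame_form m2 a2 b2 c2 l z l v + b1 * frame_form m2 a2 b2 c2 l z z v) *\<^sub>R l
      + (b1 * frame_form m2 a2 b2 c2 l z l v + c1 * frame_form m2 a2 b2 c2 l z z v) *\<^sub>R z"
    by (simp only: matrix_vector_mul_assoc[symmetric] frame_matrix_mult_vec[of m1 a1 b1 c1 l z "?B *v v"]
        inner_frame_matrix_mult_vec)
  also have "\<dots> = (m1 * m2) *\<^sub>R v
      + ((l \<bullet> v) * (m2 * a1 + a2 * (m1 + a1) + b2 * b1 * w)
         + (z \<bullet> v) * (m2 * b1 + b2 * (m1 + a1) + c2 * b1 * w)) *\<^sub>R l
      + ((l \<bullet> v) * (m2 * b1 + a2 * b1 + b2 * (m1 + c1 * w))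
         + (z \<bullet> v) * (m2 * c1 + b2 * b1 + c2 * (m1 + c1 * w))) *\<^sub>R z"
    using assms(1-3)
    by (simp add: frame_matrix_mult_vec frame_form_def inner_commute[of z l] vec_eq_iff algebra_simps)
  also have "\<dots> = mat 1 *v v"
    using assms(4-) by simp
  finally show "?A ** ?B *v v = mat 1 *v v" .
qed

lemma sum_frame_matrix_frame_cubic:
  fixes l z :: "real^'n::finite"
  assumes "l \<bullet> l = 1" and "l \<bullet> z = 0" and "z \<bullet> z = w"
  shows "(\<Sum>j\<in>UNIV. \<Sum>k\<in>UNIV. frame_matrix m a b c l z $ j $ k * frame_cubic k1 k2 l z v (axis j 1) (axis k 1))
       = (z \<bullet> v) * (k1 * ((real CARD('n) + 1) * m + 3 * c * w) + k2 * w * (m + c * w))"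
proof -
  let ?A = "frame_matrix m a b c l z"
  let ?S = "\<lambda>p q. \<Sum>j\<in>UNIV. \<Sum>k\<in>UNIV. ?A $ j $ k * (p $ j * q $ k)"
  have "(\<Sum>j\<in>UNIV. \<Sum>k\<in>UNIV. ?A $ j $ k * frame_cubic k1 k2 l z v (axis j 1) (axis k 1))
      = (\<Sum>j\<in>UNIV. \<Sum>k\<in>UNIV. k1 * (?A $ j $ k * (v $ j * z $ k)) + k1 * (?A $ j $ k * (z $ j * v $ k))
          + k1 * (?A $ j $ k * (if j = k then z \<bullet> v else 0))
          - (k1 * (l \<bullet> v)) * (?A $ j $ k * (l $ j * z $ k)) - (k1 * (l \<bullet> v)) * (?A $ j $ k * (z $ j * l $ k))
          - (k1 * (z \<bullet> v)) * (?A $ j $ k * (l $ j * l $ k)) + (k2 * (z \<bullet> v)) * (?A $ j $ k * (z $ j * z $ k)))"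
    by (simp only: frame_cubic_axis) (simp add: algebra_simps)
  also have "\<dots> = k1 * ?S v z + k1 * ?S z v + k1 * (\<Sum>j\<in>UNIV. \<Sum>k\<in>UNIV. ?A $ j $ k * (if j = k then z \<bullet> v else 0))
      - (k1 * (l \<bullet> v)) * ?S l z - (k1 * (l \<bullet> v)) * ?S z l - (k1 * (z \<bullet> v)) * ?S l l + (k2 * (z \<bullet> v)) * ?S z z"
    by (simp only: sum.distrib sum_subtractf sum_distrib_left)
  also have "\<dots> = (z \<bullet> v) * (k1 * ((real CARD('n) + 1) * m + 3 * c * w) + k2 * w * (m + c * w))"
    using assms
    by (simp only: sum_frame_matrix_bilinear sum_sum_delta_mult trace_frame_matrix)
      (simp add: frame_form_def inner_commute[of v z] inner_commute[of z l] algebra_simps)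
  finally show ?thesis .
qed

lemma mean_cartan_norm_frame:
  fixes F :: "real^'n::finite \<Rightarrow> real^'n \<Rightarrow> real" and l z :: "real^'n"
  assumes "l \<bullet> l = 1" and "l \<bullet> z = 0" and "z \<bullet> z = w"
    and ginv: "matrix_inv (fund_matrix F x y) = frame_matrix m a b c l z"
    and cartan: "\<And>i j k. cartan F x y i j k = frame_cubic k1 k2 l z (axis i 1) (axis j 1) (axis k 1)"
  shows "mean_cartan_norm F x y
       = \<bar>k1 * ((real CARD('n) + 1) * m + 3 * c * w) + k2 * w * (m + c * w)\<bar> * sqrt (m * w + c * w\<^sup>2)"
proof -
  define \<alpha> where "\<alpha> = k1 * ((real CARD('n) + 1) * m + 3 * c * w) + k2 * w * (m + c * w)"
  have "mean_cartan F x y i = (\<alpha> *\<^sub>R z) $ i" for i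
    using sum_frame_matrix_frame_cubic[OF assms(1-3), of m a b c k1 k2 "axis i 1"]
    by (simp add: mean_cartan_def ginv cartan \<alpha>_def inner_axis mult.commute)
  then have "mean_cartan_norm F x y = sqrt (frame_form m a b c l z (\<alpha> *\<^sub>R z) (\<alpha> *\<^sub>R z))"
    by (simp add: mean_cartan_norm_def ginv sum_frame_matrix_bilinear[symmetric] mult.assoc)
  also have "\<dots> = sqrt (\<alpha>\<^sup>2 * (m * w + c * w\<^sup>2))"
    using assms(1-3)
    by (simp add: frame_form_def inner_commute[of z l] power2_eq_square algebra_simps)
  finally show ?thesis
    by (simp only: real_sqrt_mult real_sqrt_abs \<alpha>_def)
qed

section \<open>Fundamental and Cartan tensors of a spherically symmetric metric\<close>

definition phi_ds :: "(real \<Rightarrow> real \<Rightarrow> real) \<Rightarrow> nat \<Rightarrow> 'a::real_inner \<Rightarrow> 'a \<Rightarrow> real" where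
  "phi_ds \<phi> k x y = (ds ^^ k) \<phi> (norm x) (s_coord x y)"

definition sph_fund_form :: "(real \<Rightarrow> real \<Rightarrow> real) \<Rightarrow> 'a::real_inner \<Rightarrow> 'a \<Rightarrow> 'a \<Rightarrow> 'a \<Rightarrow> real" where
  "sph_fund_form \<phi> x y =
     (let s = s_coord x y; p0 = phi_ds \<phi> 0 x y; p1 = phi_ds \<phi> 1 x y; p2 = phi_ds \<phi> 2 x y
      in frame_form (p0 * (p0 - s * p1)) (s * p0 * p1) (p0 * p1) (p1\<^sup>2 + p0 * p2) (sgn y) (orth_part x y))"

definition sph_cartan_form :: "(real \<Rightarrow> real \<Rightarrow> real) \<Rightarrow> 'a::real_inner \<Rightarrow> 'a \<Rightarrow> 'a \<Rightarrow> 'a \<Rightarrow> 'a \<Rightarrow> real" where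
  "sph_cartan_form \<phi> x y =
     (let s = s_coord x y; u = norm y;
          p0 = phi_ds \<phi> 0 x y; p1 = phi_ds \<phi> 1 x y; p2 = phi_ds \<phi> 2 x y; p3 = phi_ds \<phi> 3 x y
      in frame_cubic ((p0 * p1 - s * (p1\<^sup>2 + p0 * p2)) / (2 * u)) ((3 * p1 * p2 + p0 * p3) / (2 * u))
           (sgn y) (orth_part x y))"

lemma sph_fund_form_pos_def_imp:
  fixes \<phi> :: "real \<Rightarrow> real \<Rightarrow> real" and x y :: "'a::real_inner"
  defines "s \<equiv> s_coord x y" and "p0 \<equiv> phi_ds \<phi> 0 x y" and "p1 \<equiv> phi_ds \<phi> 1 x y"
    and "p2 \<equiv> phi_ds \<phi> 2 x y" and "w \<equiv> (norm x)\<^sup>2 - (s_coord x y)\<^sup>2"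
  assumes "y \<noteq> 0" and pos: "\<And>\<xi>. \<xi> \<noteq> 0 \<Longrightarrow> 0 < sph_fund_form \<phi> x y \<xi> \<xi>"
  shows "p0 \<noteq> 0" and "p0 - s * p1 \<noteq> 0 \<Longrightarrow> p0 * (p0 - s * p1 + w * p2) \<noteq> 0"
proof -
  note frame = frame_form_pos_def_imp[OF inner_sgn_self[OF \<open>y \<noteq> 0\<close>] inner_sgn_orth_part[OF \<open>y \<noteq> 0\<close>],
      of "p0 * (p0 - s * p1)" "s * p0 * p1" "p0 * p1" "p1\<^sup>2 + p0 * p2"]
  have pos': "\<And>\<xi>. \<xi> \<noteq> 0 \<Longrightarrow>
      0 < frame_form (p0 * (p0 - s * p1)) (s * p0 * p1) (p0 * p1) (p1\<^sup>2 + p0 * p2) (sgn y) (orth_part x y) \<xi> \<xi>"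
    using pos by (simp add: sph_fund_form_def Let_def s_def p0_def p1_def p2_def)
  have "0 < p0\<^sup>2"
    using frame(1)[OF pos'] by (simp add: power2_eq_square algebra_simps)
  then show "p0 \<noteq> 0"
    by simp
  assume "p0 - s * p1 \<noteq> 0"
  have zz: "orth_part x y \<bullet> orth_part x y = w"
    using \<open>y \<noteq> 0\<close> by (simp add: inner_orth_part_self w_def s_def)
  show "p0 * (p0 - s * p1 + w * p2) \<noteq> 0"
  proof (cases "orth_part x y = 0")
    case True
    then have "w = 0"
      using zz by simp
    with \<open>p0 \<noteq> 0\<close> \<open>p0 - s * p1 \<noteq> 0\<close> show ?thesis
      by simp
  next
    case False
    from frame(2)[OF pos' False]
    have "0 < p0\<^sup>2 * (p0 * (p0 - s * p1 + w * p2))"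
      unfolding zz by (simp add: power2_eq_square algebra_simps)
    then show ?thesis
      by auto
  qed
qed

locale s_smooth =
  fixes \<phi> :: "real \<Rightarrow> real \<Rightarrow> real" and x :: "'a::real_inner"
  assumes has_real_derivative_ds: "\<And>k y. y \<noteq> 0 \<Longrightarrow>
    ((ds ^^ k) \<phi> (norm x) has_real_derivative (ds ^^ Suc k) \<phi> (norm x) (s_coord x y)) (at (s_coord x y))"
begin

lemma has_real_derivative_phi_ds_line:
  assumes "y \<noteq> 0"
  shows "((\<lambda>t. phi_ds \<phi> k x (y + t *\<^sub>R q)) has_real_derivative
           phi_ds \<phi> (k + 1) x y * (orth_part x y \<bullet> q / norm y)) (at 0)"
proof -
  have "((ds ^^ k) \<phi> (norm x) has_real_derivative phi_ds \<phi> (k + 1) x y)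
      (at (s_coord x (y + 0 *\<^sub>R q)))"
    using has_real_derivative_ds[OF assms] by (simp add: phi_ds_def)
  from DERIV_chain2[OF this has_real_derivative_s_coord_line[OF assms]]
  show ?thesis
    by (simp add: phi_ds_def)
qed

lemma dirderiv_sph_sq:
  assumes "y \<noteq> 0"
  shows "dirderiv (\<lambda>y. (norm y * \<phi> (norm x) (s_coord x y))\<^sup>2) y w
       = 2 * norm y * phi_ds \<phi> 0 x y * (phi_ds \<phi> 0 x y * (sgn y \<bullet> w) + phi_ds \<phi> 1 x y * (orth_part x y \<bullet> w))"
proof -
  have F_sq: "(\<lambda>y. (norm y * \<phi> (norm x) (s_coord x y))\<^sup>2) = (\<lambda>y. (norm y * phi_ds \<phi> 0 x y)\<^sup>2)"
    by (simp add: phi_ds_def)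
  have "((\<lambda>t. (norm (y + t *\<^sub>R w) * phi_ds \<phi> 0 x (y + t *\<^sub>R w))\<^sup>2) has_real_derivative
      2 * norm y * phi_ds \<phi> 0 x y * (phi_ds \<phi> 0 x y * (sgn y \<bullet> w) + phi_ds \<phi> 1 x y * (orth_part x y \<bullet> w))) (at 0)"
    by (rule has_real_derivative_norm_line[OF assms] has_real_derivative_phi_ds_line[OF assms]
        derivative_eq_intros refl)+
      (use assms in \<open>simp add: field_simps power2_eq_square\<close>)
  then show ?thesis
    unfolding F_sq by (rule dirderiv_eqI)
qed

lemma dirderiv_dirderiv_sph_sq:
  assumes "y \<noteq> 0"
  shows "dirderiv (\<lambda>y. dirderiv (\<lambda>y. (norm y * \<phi> (norm x) (s_coord x y))\<^sup>2) y w) y v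
       = 2 * sph_fund_form \<phi> x y v w"
proof -
  have "dirderiv (\<lambda>y. dirderiv (\<lambda>y. (norm y * \<phi> (norm x) (s_coord x y))\<^sup>2) y w) y v
      = dirderiv (\<lambda>y. 2 * norm y * phi_ds \<phi> 0 x y *
          (phi_ds \<phi> 0 x y * (sgn y \<bullet> w) + phi_ds \<phi> 1 x y * (orth_part x y \<bullet> w))) y v"
    using assms by (rule dirderiv_cong_nonzero) (rule dirderiv_sph_sq)
  also have "\<dots> = 2 * sph_fund_form \<phi> x y v w"
  proof (rule dirderiv_eqI)
    define u s p0 p1 p2 lv lw zv zw vw where "u = norm y" and "s = s_coord x y"
      and "p0 = phi_ds \<phi> 0 x y" and "p1 = phi_ds \<phi> 1 x y" and "p2 = phi_ds \<phi> 2 x y"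
      and "lv = sgn y \<bullet> v" and "lw = sgn y \<bullet> w" and "zv = orth_part x y \<bullet> v" and "zw = orth_part x y \<bullet> w"
      and "vw = v \<bullet> w"
    have "u \<noteq> 0"
      using assms by (simp add: u_def)
    show "((\<lambda>t. 2 * norm (y + t *\<^sub>R v) * phi_ds \<phi> 0 x (y + t *\<^sub>R v) *
            (phi_ds \<phi> 0 x (y + t *\<^sub>R v) * (sgn (y + t *\<^sub>R v) \<bullet> w)
             + phi_ds \<phi> 1 x (y + t *\<^sub>R v) * (orth_part x (y + t *\<^sub>R v) \<bullet> w)))
          has_real_derivative 2 * sph_fund_form \<phi> x y v w) (at 0)"
      by (rule has_real_derivative_norm_line[OF assms] has_real_derivative_phi_ds_line[OF assms]
          has_real_derivative_sgn_line[OF assms] has_real_derivative_orth_part_line[OF assms]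
          derivative_eq_intros refl)+
        (simp only: sph_fund_form_def frame_form_def Let_def add_0_right scaleR_zero_left one_add_one
          add_0_left inner_commute[of w v] flip: u_def s_def p0_def p1_def p2_def lv_def lw_def zv_def zw_def
          vw_def,
         use \<open>u \<noteq> 0\<close> in \<open>simp add: field_simps power2_eq_square\<close>)
  qed
  finally show ?thesis .
qed

lemma dirderiv_sph_fund_form:
  assumes "y \<noteq> 0"
  shows "dirderiv (\<lambda>y. sph_fund_form \<phi> x y v w) y q = 2 * sph_cartan_form \<phi> x y v w q"
proof (rule dirderiv_eqI)
  define u s p0 p1 p2 p3 lv lw lq zv zw zq vw vq wq where "u = norm y" and "s = s_coord x y"
    and "p0 = phi_ds \<phi> 0 x y" and "p1 = phi_ds \<phi> 1 x y" and "p2 = phi_ds \<phi> 2 x y" and "p3 = phi_ds \<phi> 3 x y"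
    and "lv = sgn y \<bullet> v" and "lw = sgn y \<bullet> w" and "lq = sgn y \<bullet> q"
    and "zv = orth_part x y \<bullet> v" and "zw = orth_part x y \<bullet> w" and "zq = orth_part x y \<bullet> q"
    and "vw = v \<bullet> w" and "vq = v \<bullet> q" and "wq = w \<bullet> q"
  have "u \<noteq> 0"
    using assms by (simp add: u_def)
  show "((\<lambda>t. sph_fund_form \<phi> x (y + t *\<^sub>R q) v w) has_real_derivative 2 * sph_cartan_form \<phi> x y v w q) (at 0)"
    unfolding sph_fund_form_def frame_form_def Let_def
    by (rule has_real_derivative_s_coord_line[OF assms] has_real_derivative_phi_ds_line[OF assms]
        has_real_derivative_sgn_line[OF assms] has_real_derivative_orth_part_line[OF assms]
        derivative_eq_intros refl)+
      (simp only: sph_cartan_form_def frame_cubic_def Let_def add_0_right scaleR_zero_left one_add_one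
        add_0_left numeral_plus_one add_num_simps
        flip: u_def s_def p0_def p1_def p2_def p3_def lv_def lw_def lq_def zv_def zw_def zq_def vw_def vq_def wq_def,
       use \<open>u \<noteq> 0\<close> in \<open>simp add: field_simps power2_eq_square\<close>)
qed

end

lemma fund_tensor_sph:
  fixes x y :: "real^'n::finite"
  assumes "s_smooth \<phi> x" and "y \<noteq> 0"
  shows "fund_tensor (\<lambda>x y. norm y * \<phi> (norm x) (s_coord x y)) x y i j
       = sph_fund_form \<phi> x y (axis i 1) (axis j 1)"
  using s_smooth.dirderiv_dirderiv_sph_sq[OF assms] by (simp add: fund_tensor_def ypd_def)

lemma cartan_sph:
  fixes x y :: "real^'n::finite"
  assumes "s_smooth \<phi> x" and "y \<noteq> 0"
  shows "cartan (\<lambda>x y. norm y * \<phi> (norm x) (s_coord x y)) x y i j k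
       = sph_cartan_form \<phi> x y (axis i 1) (axis j 1) (axis k 1)"
proof -
  have "dirderiv (\<lambda>y. fund_tensor (\<lambda>x y. norm y * \<phi> (norm x) (s_coord x y)) x y i j) y (axis k 1)
      = dirderiv (\<lambda>y. sph_fund_form \<phi> x y (axis i 1) (axis j 1)) y (axis k 1)"
    using assms(2) by (rule dirderiv_cong_nonzero) (rule fund_tensor_sph[OF assms(1)])
  then show ?thesis
    using s_smooth.dirderiv_sph_fund_form[OF assms] by (simp add: cartan_def ypd_def)
qed

lemma fund_matrix_sph:
  fixes \<phi> :: "real \<Rightarrow> real \<Rightarrow> real" and x y :: "real^'n::finite"
  defines "s \<equiv> s_coord x y" and "p0 \<equiv> phi_ds \<phi> 0 x y" and "p1 \<equiv> phi_ds \<phi> 1 x y"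
    and "p2 \<equiv> phi_ds \<phi> 2 x y"
  assumes smooth: "s_smooth \<phi> x" and "y \<noteq> 0"
  shows "fund_matrix (\<lambda>x y. norm y * \<phi> (norm x) (s_coord x y)) x y
       = frame_matrix (p0 * (p0 - s * p1)) (s * p0 * p1) (p0 * p1) (p1\<^sup>2 + p0 * p2) (sgn y) (orth_part x y)"
  by (simp add: vec_eq_iff fund_matrix_def frame_matrix_def fund_tensor_sph[OF smooth \<open>y \<noteq> 0\<close>]
      sph_fund_form_def Let_def s_def p0_def p1_def p2_def)

lemma sum_fund_tensor_sph:
  fixes x y \<xi> :: "real^'n::finite"
  assumes "s_smooth \<phi> x" and "y \<noteq> 0"
  shows "(\<Sum>i\<in>UNIV. \<Sum>j\<in>UNIV. fund_tensor (\<lambda>x y. norm y * \<phi> (norm x) (s_coord x y)) x y i j * \<xi> $ i * \<xi> $ j)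
       = sph_fund_form \<phi> x y \<xi> \<xi>"
  using fund_matrix_sph[OF assms] sum_frame_matrix_bilinear[of _ _ _ _ "sgn y" "orth_part x y" \<xi> \<xi>]
  by (simp add: fund_matrix_def vec_eq_iff mult.assoc sph_fund_form_def Let_def)

lemma matrix_inv_sph_frame_matrix:
  fixes l z :: "real^'n::finite"
  assumes "l \<bullet> l = 1" and "l \<bullet> z = 0" and "z \<bullet> z = w"
    and \<sigma>: "\<sigma> = p0 - s * p1" and \<tau>: "\<tau> = \<sigma> + w * p2"
    and nonzero: "p0 \<noteq> 0" "\<sigma> \<noteq> 0" "\<tau> \<noteq> 0"
  shows "matrix_inv (frame_matrix (p0 * \<sigma>) (s * p0 * p1) (p0 * p1) (p1\<^sup>2 + p0 * p2) l z)
       = frame_matrix (1 / (p0 * \<sigma>)) ((p0 * \<sigma> + (p1\<^sup>2 + p0 * p2) * w) / (p0 * p0 * (p0 * \<tau>)) - 1 / (p0 * \<sigma>))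
           (- p1 / (p0 * (p0 * \<tau>))) (- p2 / (\<sigma> * (p0 * \<tau>))) l z"
  by (rule matrix_inv_frame_matrix[OF assms(1-3)])
    (use nonzero in \<open>simp add: field_simps power2_eq_square; simp add: algebra_simps \<sigma> \<tau>\<close>)+

lemma mean_cartan_coeff_eq:
  fixes p0 p1 p2 p3 s w u n :: real
  assumes \<sigma>: "\<sigma> = p0 - s * p1" and \<tau>: "\<tau> = \<sigma> + w * p2"
    and nonzero: "u \<noteq> 0" "p0 \<noteq> 0" "\<sigma> \<noteq> 0" "\<tau> \<noteq> 0"
  shows "((p0 * p1 - s * (p1\<^sup>2 + p0 * p2)) / (2 * u)) * ((n + 1) * (1 / (p0 * \<sigma>)) + 3 * (- p2 / (\<sigma> * (p0 * \<tau>))) * w)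
     + ((3 * p1 * p2 + p0 * p3) / (2 * u)) * w * (1 / (p0 * \<sigma>) + (- p2 / (\<sigma> * (p0 * \<tau>))) * w)
   = ((n + 1) * (\<sigma> * p1 - s * p0 * p2) * (\<sigma> + w * p2) + w * (\<sigma> * p3 + 3 * s * p2\<^sup>2) * p0)
     / (2 * u * \<sigma> * (p0 * \<tau>))"
  using nonzero by (simp add: field_simps power2_eq_square) (simp add: \<sigma> \<tau> algebra_simps)

lemma mean_cartan_norm_sph:
  fixes \<phi> :: "real \<Rightarrow> real \<Rightarrow> real" and x y :: "real^'n::finite" and \<sigma> \<rho> :: real
  defines "F \<equiv> \<lambda>x y. norm y * \<phi> (norm x) (s_coord x y)"
    and "s \<equiv> s_coord x y" and "w \<equiv> (norm x)\<^sup>2 - (s_coord x y)\<^sup>2"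
    and "p0 \<equiv> phi_ds \<phi> 0 x y" and "p1 \<equiv> phi_ds \<phi> 1 x y"
    and "p2 \<equiv> phi_ds \<phi> 2 x y" and "p3 \<equiv> phi_ds \<phi> 3 x y"
  assumes smooth: "s_smooth \<phi> x" and "y \<noteq> 0"
    and pos: "\<And>\<xi>. \<xi> \<noteq> 0 \<Longrightarrow> 0 < (\<Sum>i\<in>UNIV. \<Sum>j\<in>UNIV. fund_tensor F x y i j * \<xi> $ i * \<xi> $ j)"
    and \<sigma>_def: "\<sigma> = p0 - s * p1" and \<rho>_def: "\<rho> = p0 * (\<sigma> + w * p2)" and "\<sigma> \<noteq> 0"
  shows "mean_cartan_norm F x y =
    \<bar>((real CARD('n) + 1) * (\<sigma> * p1 - s * p0 * p2) * (\<sigma> + w * p2) + w * (\<sigma> * p3 + 3 * s * p2\<^sup>2) * p0)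
      / (2 * norm y * \<sigma> * \<rho>)\<bar> * sqrt (w / \<rho>)"
proof -
  have ll: "sgn y \<bullet> sgn y = 1" and lz: "sgn y \<bullet> orth_part x y = 0"
    and zz: "orth_part x y \<bullet> orth_part x y = w"
    using \<open>y \<noteq> 0\<close> by (simp_all add: inner_sgn_self inner_sgn_orth_part inner_orth_part_self w_def)
  have "p0 \<noteq> 0" and "\<rho> \<noteq> 0"
    using sph_fund_form_pos_def_imp[OF \<open>y \<noteq> 0\<close>, of \<phi>] pos sum_fund_tensor_sph[OF smooth \<open>y \<noteq> 0\<close>] \<open>\<sigma> \<noteq> 0\<close>
    by (simp_all add: F_def p0_def p1_def p2_def s_def w_def \<sigma>_def \<rho>_def)
  then have "\<sigma> + w * p2 \<noteq> 0"
    by (simp add: \<rho>_def)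
  define m c k1 k2 where "m = 1 / (p0 * \<sigma>)" and "c = - p2 / (\<sigma> * \<rho>)"
    and "k1 = (p0 * p1 - s * (p1\<^sup>2 + p0 * p2)) / (2 * norm y)" and "k2 = (3 * p1 * p2 + p0 * p3) / (2 * norm y)"
  obtain a b where ginv: "matrix_inv (fund_matrix F x y) = frame_matrix m a b c (sgn y) (orth_part x y)"
    using matrix_inv_sph_frame_matrix[OF ll lz zz \<sigma>_def refl \<open>p0 \<noteq> 0\<close> \<open>\<sigma> \<noteq> 0\<close> \<open>\<sigma> + w * p2 \<noteq> 0\<close>]
      fund_matrix_sph[OF smooth \<open>y \<noteq> 0\<close>]
    by (simp add: F_def s_def p0_def p1_def p2_def \<sigma>_def \<rho>_def m_def c_def)
  have "cartan F x y i j k = frame_cubic k1 k2 (sgn y) (orth_part x y) (axis i 1) (axis j 1) (axis k 1)"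
    for i j k
    using cartan_sph[OF smooth \<open>y \<noteq> 0\<close>]
    by (simp add: F_def sph_cartan_form_def Let_def s_def p0_def p1_def p2_def p3_def k1_def k2_def)
  from mean_cartan_norm_frame[OF ll lz zz ginv this]
  have "mean_cartan_norm F x y
      = \<bar>k1 * ((real CARD('n) + 1) * m + 3 * c * w) + k2 * w * (m + c * w)\<bar> * sqrt (m * w + c * w\<^sup>2)" .
  also have "m * w + c * w\<^sup>2 = w / \<rho>"
    using \<open>\<sigma> \<noteq> 0\<close> \<open>\<rho> \<noteq> 0\<close> \<open>p0 \<noteq> 0\<close>
    by (simp add: m_def c_def field_simps power2_eq_square) (simp add: \<rho>_def algebra_simps)
  also have "k1 * ((real CARD('n) + 1) * m + 3 * c * w) + k2 * w * (m + c * w)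
      = ((real CARD('n) + 1) * (\<sigma> * p1 - s * p0 * p2) * (\<sigma> + w * p2) + w * (\<sigma> * p3 + 3 * s * p2\<^sup>2) * p0)
        / (2 * norm y * \<sigma> * \<rho>)"
    using mean_cartan_coeff_eq[of _ _ _ _ _ w p2 "norm y" "real CARD('n)" p3, OF \<sigma>_def refl] \<open>y \<noteq> 0\<close>
      \<open>p0 \<noteq> 0\<close> \<open>\<sigma> \<noteq> 0\<close> \<open>\<sigma> + w * p2 \<noteq> 0\<close>
    by (simp add: k1_def k2_def m_def c_def \<rho>_def)
  finally show ?thesis .
qed

theorem corollary1:
  fixes U :: "(real^'n) set"
    and \<phi> :: "real \<Rightarrow> real \<Rightarrow> real"
    and \<Omega> :: "(real \<times> real) set"
    and F :: "real^'n \<Rightarrow> real^'n \<Rightarrow> real"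
  assumes "open U" and "connected U" and "U \<noteq> {}"
    and "smooth_on \<Omega> (\<lambda>p. \<phi> (fst p) (snd p))"
    and "\<forall>x\<in>U. \<forall>y. y \<noteq> 0 \<longrightarrow> (norm x, inner x y / norm y) \<in> \<Omega>"
    and "\<And>x y. F x y = norm y * \<phi> (norm x) (inner x y / norm y)"
    and "finsler_metric U F"
  shows "\<forall>x\<in>U. \<forall>y. y \<noteq> 0 \<longrightarrow>
    (let u = norm y; r = norm x; s = inner x y / norm y;
         p = \<phi> r s;
         p1 = ds \<phi> r s;
         p2 = ds (ds \<phi>) r s;
         p3 = ds (ds (ds \<phi>)) r s;
         \<sigma>\<^sub>1 = p - s * p1;
         \<rho> = p * (\<sigma>\<^sub>1 + (r\<^sup>2 - s\<^sup>2) * p2)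
     in \<sigma>\<^sub>1 \<noteq> 0 \<longrightarrow>
        mean_cartan_norm F x y =
          \<bar>((real CARD('n) + 1) * (\<sigma>\<^sub>1 * p1 - s * p * p2) * (\<sigma>\<^sub>1 + (r\<^sup>2 - s\<^sup>2) * p2)
             + (r\<^sup>2 - s\<^sup>2) * (\<sigma>\<^sub>1 * p3 + 3 * s * p2\<^sup>2) * p)
           / (2 * u * \<sigma>\<^sub>1 * \<rho>)\<bar>
          * sqrt ((r\<^sup>2 - s\<^sup>2) / \<rho>))"
proof -
  have F: "F = (\<lambda>x y. norm y * \<phi> (norm x) (s_coord x y))"
    using assms(6) by (simp add: s_coord_def fun_eq_iff)
  have smooth: "s_smooth \<phi> x" if "x \<in> U" for x
  proof
    fix k and y :: "real^'n"
    assume "y \<noteq> 0"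
    then have "(norm x, s_coord x y) \<in> \<Omega>"
      using assms(5) \<open>x \<in> U\<close> by (simp add: s_coord_def)
    then show "((ds ^^ k) \<phi> (norm x) has_real_derivative (ds ^^ Suc k) \<phi> (norm x) (s_coord x y))
        (at (s_coord x y))"
      by (rule has_real_derivative_ds_iterate[OF assms(4)])
  qed
  have pos: "0 < (\<Sum>i\<in>UNIV. \<Sum>j\<in>UNIV. fund_tensor F x y i j * \<xi> $ i * \<xi> $ j)"
    if "x \<in> U" and "y \<noteq> 0" and "\<xi> \<noteq> 0" for x y \<xi>
    using assms(7) that unfolding finsler_metric_def by blast
  show ?thesis
    using mean_cartan_norm_sph[OF smooth _ pos[unfolded F] refl refl]
    by (simp add: F Let_def phi_ds_def s_coord_def numeral_2_eq_2 numeral_3_eq_3)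
qed

end
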